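(* Let $X$ be a topological space and $Y$ be a metrizable space. Then $$\mathrm{B}_1(X,Y)\subseteq \Sigma^{f*}_0(X,Y)=\mathrm{K}_1(X,Y)\cap\Sigma^f(X,Y).$$
   Context: A subset of $X$ is functionally closed (functionally open) if it is of the form $\varphi^{-1}(0)$ (resp. $X\setminus\varphi^{-1}(0)$) for some continuous $\varphi:X\to[0,1]$. A functionally $F_\sigma$-set is a countable union of functionally closed sets; a functionally $G_\delta$-set is a countable intersection of functionally open sets. $\mathrm{B}_1(X,Y)$ is the set of mappings $f:X\to Y$ that are pointwise limits of sequences of continuous mappings $X\to Y$. $\mathrm{K}_1(X,Y)$ is the set of mappings $f:X\to Y$ such that $f^{-1}(V)$ is a functionally $F_\sigma$-set in $X$ for every open $V\subseteq Y$. A family $(A_i:i\in I)$ of subsets of $X$ is strongly functionally discrete (sfd) if there is a discrete family $(U_i:i\in I)$ of functionally open subsets of $X$ with $\overline{A_i}\subseteq U_i$ for all $i$ (a family is discrete if every point has a neighborhood meeting at most one member). A family is $\sigma$-sfd if it is a countable union of sfd families. A family $\mathcal B$ of subsets of $X$ is a base for $f:X\to Y$ if for every open $V\subseteq Y$, $f^{-1}(V)$ is a union of members of $\mathcal B$. $\Sigma^f(X,Y)$ is the set of mappings $f:X\to Y$ having a $\sigma$-sfd base; $\Sigma^{f*}_0(X,Y)$ is the set of mappings $f:X\to Y$ having a $\sigma$-sfd base consisting of functionally closed subsets of $X$. *)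

theory Defs
  imports "HOL-Analysis.Analysis"
begin

definition fclosed :: "'a topology \<Rightarrow> 'a set \<Rightarrow> bool" where
  "fclosed X A \<longleftrightarrow> (\<exists>\<phi>. continuous_map X (subtopology euclideanreal {0..1}) \<phi> \<and>
      A = {x \<in> topspace X. \<phi> x = 0})"

definition fopen :: "'a topology \<Rightarrow> 'a set \<Rightarrow> bool" where
  "fopen X A \<longleftrightarrow> (\<exists>\<phi>. continuous_map X (subtopology euclideanreal {0..1}) \<phi> \<and>
      A = topspace X - {x \<in> topspace X. \<phi> x = 0})"

definition fFsigma :: "'a topology \<Rightarrow> 'a set \<Rightarrow> bool" where
  "fFsigma X A \<longleftrightarrow> (\<exists>F :: nat \<Rightarrow> 'a set. (\<forall>n. fclosed X (F n)) \<and> A = (\<Union>n. F n))"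

definition fGdelta :: "'a topology \<Rightarrow> 'a set \<Rightarrow> bool" where
  "fGdelta X A \<longleftrightarrow> (\<exists>G :: nat \<Rightarrow> 'a set. (\<forall>n. fopen X (G n)) \<and> A = (\<Inter>n. G n))"

definition Baire1 :: "'a topology \<Rightarrow> 'b topology \<Rightarrow> ('a \<Rightarrow> 'b) \<Rightarrow> bool" where
  "Baire1 X Y f \<longleftrightarrow> (\<exists>g :: nat \<Rightarrow> 'a \<Rightarrow> 'b. (\<forall>n. continuous_map X Y (g n)) \<and>
      (\<forall>x \<in> topspace X. limitin Y (\<lambda>n. g n x) (f x) sequentially))"

definition K1 :: "'a topology \<Rightarrow> 'b topology \<Rightarrow> ('a \<Rightarrow> 'b) \<Rightarrow> bool" where
  "K1 X Y f \<longleftrightarrow> (\<forall>V. openin Y V \<longrightarrow> fFsigma X {x \<in> topspace X. f x \<in> V})"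

definition discrete_family :: "'a topology \<Rightarrow> 'i set \<Rightarrow> ('i \<Rightarrow> 'a set) \<Rightarrow> bool" where
  "discrete_family X I U \<longleftrightarrow> (\<forall>x \<in> topspace X. \<exists>N. openin X N \<and> x \<in> N \<and>
      (\<forall>i \<in> I. \<forall>j \<in> I. U i \<inter> N \<noteq> {} \<and> U j \<inter> N \<noteq> {} \<longrightarrow> i = j))"

definition sfd :: "'a topology \<Rightarrow> 'i set \<Rightarrow> ('i \<Rightarrow> 'a set) \<Rightarrow> bool" where
  "sfd X I A \<longleftrightarrow> (\<exists>U. discrete_family X I U \<and>
      (\<forall>i \<in> I. fopen X (U i) \<and> X closure_of (A i) \<subseteq> U i))"

definition sigma_sfd :: "'a topology \<Rightarrow> 'a set set \<Rightarrow> bool" where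
  "sigma_sfd X \<B> \<longleftrightarrow> (\<exists>\<A> :: nat \<Rightarrow> 'a set set. (\<forall>n. sfd X (\<A> n) id) \<and> \<B> = (\<Union>n. \<A> n))"

definition base_for :: "'a topology \<Rightarrow> 'b topology \<Rightarrow> ('a \<Rightarrow> 'b) \<Rightarrow> 'a set set \<Rightarrow> bool" where
  "base_for X Y f \<B> \<longleftrightarrow> (\<forall>V. openin Y V \<longrightarrow>
      (\<exists>\<C> \<subseteq> \<B>. {x \<in> topspace X. f x \<in> V} = \<Union>\<C>))"

definition Sigma_f :: "'a topology \<Rightarrow> 'b topology \<Rightarrow> ('a \<Rightarrow> 'b) \<Rightarrow> bool" where
  "Sigma_f X Y f \<longleftrightarrow> (\<exists>\<B>. sigma_sfd X \<B> \<and> base_for X Y f \<B>)"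

definition Sigma_f_star_0 :: "'a topology \<Rightarrow> 'b topology \<Rightarrow> ('a \<Rightarrow> 'b) \<Rightarrow> bool" where
  "Sigma_f_star_0 X Y f \<longleftrightarrow>
     (\<exists>\<B>. sigma_sfd X \<B> \<and> base_for X Y f \<B> \<and> (\<forall>B \<in> \<B>. fclosed X B))"

end

theory Submission
  imports Defs
begin

text \<open>
  A union of a strongly functionally discrete family of functionally closed sets is functionally
  closed, because the defining functions can be glued along the discrete neighbourhoods. So a
  \<open>\<sigma>\<close>-sfd base of functionally closed sets makes every preimage of an open set a functionally
  \<open>F\<^sub>\<sigma>\<close>-set.

  Conversely, if \<open>f \<in> K\<^sub>1 \<inter> \<Sigma>\<^sup>f\<close>, every member \<open>B\<close> of a \<open>\<sigma>\<close>-sfd base is replaced by the sets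
  \<open>F \<inter> Z\<close>, where \<open>F\<close> runs through a countable functionally closed cover of the preimage of a
  small metric neighbourhood of \<open>f(B)\<close> (this is where \<open>K\<^sub>1\<close> enters) and \<open>Z\<close> through the closed
  levels \<open>{\<psi> \<ge> 1/m}\<close> of a function \<open>\<psi>\<close> whose support is the discrete neighbourhood of \<open>B\<close>.
  These sets are functionally closed, still form a \<open>\<sigma>\<close>-sfd family, and still form a base for \<open>f\<close>.

  Finally, if \<open>f\<close> is the pointwise limit of continuous maps \<open>g\<^sub>i\<close>, take A. H. Stone's
  \<open>\<sigma>\<close>-discrete base of \<open>Y\<close>, whose members \<open>V\<close> are uniformly separated within each layer. The
  sets \<open>{x. \<forall>i \<ge> j. g\<^sub>i x \<in> closure V}\<close> are functionally closed, form strongly functionally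
  discrete layers, and constitute a base for \<open>f\<close>.
\<close>

section \<open>Functionally closed and functionally open sets\<close>

lemma fclosed_iff:
  "fclosed X A \<longleftrightarrow> (\<exists>\<phi>. continuous_map X euclideanreal \<phi> \<and> A = {x \<in> topspace X. \<phi> x = 0})"
proof
  assume "fclosed X A"
  then show "\<exists>\<phi>. continuous_map X euclideanreal \<phi> \<and> A = {x \<in> topspace X. \<phi> x = 0}"
    unfolding fclosed_def by (auto simp: continuous_map_in_subtopology)
next
  assume "\<exists>\<phi>. continuous_map X euclideanreal \<phi> \<and> A = {x \<in> topspace X. \<phi> x = 0}"
  then obtain \<phi> where \<phi>: "continuous_map X euclideanreal \<phi>" and A: "A = {x \<in> topspace X. \<phi> x = 0}"
    by blast
  have "continuous_map X euclideanreal (\<lambda>x. min 1 \<bar>\<phi> x\<bar>)"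
    using \<phi> by (intro continuous_intros) auto
  moreover have "A = {x \<in> topspace X. min 1 \<bar>\<phi> x\<bar> = 0}"
    using A by auto
  ultimately show "fclosed X A"
    unfolding fclosed_def continuous_map_in_subtopology by (intro exI[of _ "\<lambda>x. min 1 \<bar>\<phi> x\<bar>"]) auto
qed

lemma fopen_iff_fclosed_complement: "fopen X A \<longleftrightarrow> A \<subseteq> topspace X \<and> fclosed X (topspace X - A)"
  unfolding fopen_def fclosed_def by (auto simp: Diff_Diff_Int Int_absorb1)

lemma fopen_iff:
  "fopen X A \<longleftrightarrow> (\<exists>\<psi>. continuous_map X euclideanreal \<psi> \<and> A = {x \<in> topspace X. \<psi> x \<noteq> 0})"
  unfolding fopen_iff_fclosed_complement fclosed_iff by (auto 0 3)

lemma fclosed_imp_closedin: "fclosed X A \<Longrightarrow> closedin X A"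
  unfolding fclosed_iff by (auto intro: closedin_continuous_map_preimage[where C = "{0}", simplified])

lemma fclosed_Int:
  assumes "fclosed X A" "fclosed X B"
  shows "fclosed X (A \<inter> B)"
proof -
  obtain \<phi> \<psi> where "continuous_map X euclideanreal \<phi>" "A = {x \<in> topspace X. \<phi> x = 0}"
    "continuous_map X euclideanreal \<psi>" "B = {x \<in> topspace X. \<psi> x = 0}"
    using assms by (auto simp: fclosed_iff)
  then show ?thesis
    unfolding fclosed_iff
    by (intro exI[of _ "\<lambda>x. \<bar>\<phi> x\<bar> + \<bar>\<psi> x\<bar>"] conjI continuous_intros) auto
qed

lemma fclosed_le:
  assumes "continuous_map X euclideanreal \<phi>" "continuous_map X euclideanreal \<psi>"
  shows "fclosed X {x \<in> topspace X. \<phi> x \<le> \<psi> x}"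
  unfolding fclosed_iff
proof (intro exI conjI)
  show "continuous_map X euclideanreal (\<lambda>x. max 0 (\<phi> x - \<psi> x))"
    using assms by (intro continuous_intros)
qed auto

lemma fopen_less:
  assumes "continuous_map X euclideanreal \<phi>" "continuous_map X euclideanreal \<psi>"
  shows "fopen X {x \<in> topspace X. \<phi> x < \<psi> x}"
proof -
  have "topspace X - {x \<in> topspace X. \<phi> x < \<psi> x} = {x \<in> topspace X. \<psi> x \<le> \<phi> x}"
    by auto
  then show ?thesis
    unfolding fopen_iff_fclosed_complement using fclosed_le[OF assms(2,1)] by auto
qed

lemma fclosed_continuous_map_preimage:
  assumes "continuous_map X Y g" "fclosed Y C"
  shows "fclosed X {x \<in> topspace X. g x \<in> C}"
proof -
  obtain \<phi> where \<phi>: "continuous_map Y euclideanreal \<phi>" and C: "C = {y \<in> topspace Y. \<phi> y = 0}"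
    using assms(2) by (auto simp: fclosed_iff)
  have "{x \<in> topspace X. g x \<in> C} = {x \<in> topspace X. (\<phi> \<circ> g) x = 0}"
    using assms(1) C by (auto simp: continuous_map_def)
  then show ?thesis
    using continuous_map_compose[OF assms(1) \<phi>] by (auto simp: fclosed_iff)
qed

lemma fopen_continuous_map_preimage:
  assumes "continuous_map X Y g" "fopen Y U"
  shows "fopen X {x \<in> topspace X. g x \<in> U}"
proof -
  have "fclosed X {x \<in> topspace X. g x \<in> topspace Y - U}"
    using assms by (intro fclosed_continuous_map_preimage) (auto simp: fopen_iff_fclosed_complement)
  moreover have "topspace X - {x \<in> topspace X. g x \<in> U} = {x \<in> topspace X. g x \<in> topspace Y - U}"
    using assms(1) by (auto simp: continuous_map_def)
  ultimately show ?thesis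
    by (auto simp: fopen_iff_fclosed_complement)
qed

lemma continuous_map_suminf:
  fixes \<phi> :: "nat \<Rightarrow> 'a \<Rightarrow> real"
  assumes cont: "\<And>i. continuous_map X euclideanreal (\<phi> i)"
    and bound: "\<And>i x. x \<in> topspace X \<Longrightarrow> \<bar>\<phi> i x\<bar> \<le> M i" and "summable M"
  shows "continuous_map X euclideanreal (\<lambda>x. \<Sum>i. \<phi> i x)"
proof -
  have "uniform_limit (topspace X) (\<lambda>n x. \<Sum>i<n. \<phi> i x) (\<lambda>x. \<Sum>i. \<phi> i x) sequentially"
    using bound \<open>summable M\<close> by (intro Weierstrass_m_test) auto
  moreover have "continuous_map X euclideanreal (\<lambda>x. \<Sum>i<n. \<phi> i x)" for n
    using cont by (intro continuous_intros) auto
  ultimately have "continuous_map X Met_TC.mtopology (\<lambda>x. \<Sum>i. \<phi> i x)"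
    by (intro Met_TC.continuous_map_uniform_limit[where F=sequentially and f="\<lambda>n x. \<Sum>i<n. \<phi> i x"])
      (auto simp: uniform_limit_iff)
  then show ?thesis
    by simp
qed

lemma fclosed_Inter_nat:
  assumes "\<And>i::nat. fclosed X (A i)"
  shows "fclosed X (\<Inter>i. A i)"
proof -
  obtain \<phi> where \<phi>: "\<And>i. continuous_map X (subtopology euclideanreal {0..1}) (\<phi> i)"
    and A: "\<And>i. A i = {x \<in> topspace X. \<phi> i x = 0}"
    using assms unfolding fclosed_def by metis
  have cont: "\<And>i. continuous_map X euclideanreal (\<phi> i)"
    and range: "\<And>i x. x \<in> topspace X \<Longrightarrow> \<phi> i x \<in> {0..1}"
    using \<phi> by (auto simp: continuous_map_in_subtopology Pi_iff)
  define \<tau> where "\<tau> i x = (1/2::real)^i * \<phi> i x" for i x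
  have \<tau>: "0 \<le> \<tau> i x" "\<bar>\<tau> i x\<bar> \<le> (1/2)^i" if "x \<in> topspace X" for i x
    using range[OF that, of i] by (auto simp: \<tau>_def abs_mult intro!: mult_left_le)
  have "continuous_map X euclideanreal (\<tau> i)" for i
    unfolding \<tau>_def using cont by (intro continuous_intros)
  then have "continuous_map X euclideanreal (\<lambda>x. \<Sum>i. \<tau> i x)"
    by (rule continuous_map_suminf[OF _ \<tau>(2)]) auto
  moreover have "(\<Sum>i. \<tau> i x) = 0 \<longleftrightarrow> (\<forall>i. \<phi> i x = 0)" if "x \<in> topspace X" for x
  proof -
    have "summable (\<lambda>i. \<tau> i x)"
      by (rule summable_comparison_test'[of "\<lambda>i. (1/2::real)^i"]) (use \<tau>[OF that] in auto)
    then show ?thesis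
      using \<tau>[OF that] by (simp add: suminf_eq_zero_iff \<tau>_def)
  qed
  ultimately show ?thesis
    unfolding fclosed_iff using A by (intro exI[of _ "\<lambda>x. \<Sum>i. \<tau> i x"]) auto
qed

lemma fclosed_fopen_separation:
  assumes "fclosed X A" "fopen X U" "A \<subseteq> U"
  obtains h where "continuous_map X euclideanreal h"
    "\<And>x. x \<in> topspace X \<Longrightarrow> h x = 0 \<longleftrightarrow> x \<in> A"
    "\<And>x. x \<in> topspace X \<Longrightarrow> x \<notin> U \<Longrightarrow> h x = 1"
proof -
  obtain \<phi> where \<phi>: "continuous_map X euclideanreal \<phi>" and A: "A = {x \<in> topspace X. \<phi> x = 0}"
    using assms(1) by (auto simp: fclosed_iff)
  obtain \<psi> where \<psi>: "continuous_map X euclideanreal \<psi>" and U: "U = {x \<in> topspace X. \<psi> x \<noteq> 0}"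
    using assms(2) by (auto simp: fopen_iff)
  have pos: "\<bar>\<phi> x\<bar> + \<bar>\<psi> x\<bar> \<noteq> 0" if "x \<in> topspace X" for x
    using assms(3) A U that by auto
  show thesis
  proof
    show "continuous_map X euclideanreal (\<lambda>x. \<bar>\<phi> x\<bar> / (\<bar>\<phi> x\<bar> + \<bar>\<psi> x\<bar>))"
      using \<phi> \<psi> pos by (intro continuous_intros)
    show "\<bar>\<phi> x\<bar> / (\<bar>\<phi> x\<bar> + \<bar>\<psi> x\<bar>) = 0 \<longleftrightarrow> x \<in> A" if "x \<in> topspace X" for x
      using A pos[OF that] that by simp
    show "\<bar>\<phi> x\<bar> / (\<bar>\<phi> x\<bar> + \<bar>\<psi> x\<bar>) = 1" if "x \<in> topspace X" "x \<notin> U" for x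
      using U pos[OF that(1)] that by simp
  qed
qed

section \<open>Discrete and strongly functionally discrete families\<close>

lemma discrete_familyD:
  "discrete_family X I U \<Longrightarrow> x \<in> topspace X \<Longrightarrow> \<exists>N. openin X N \<and> x \<in> N \<and>
      (\<forall>i\<in>I. \<forall>j\<in>I. U i \<inter> N \<noteq> {} \<and> U j \<inter> N \<noteq> {} \<longrightarrow> i = j)"
  unfolding discrete_family_def by blast

lemma discrete_family_mono:
  assumes disc: "discrete_family X I U" and "J \<subseteq> I" "\<And>i. i \<in> J \<Longrightarrow> V i \<subseteq> U i"
  shows "discrete_family X J V"
  unfolding discrete_family_def
proof
  fix x assume x: "x \<in> topspace X"
  obtain N where "openin X N" "x \<in> N"
    and N: "\<forall>i\<in>I. \<forall>j\<in>I. U i \<inter> N \<noteq> {} \<and> U j \<inter> N \<noteq> {} \<longrightarrow> i = j"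
    using discrete_familyD[OF disc x] by blast
  moreover have "\<forall>i\<in>J. \<forall>j\<in>J. V i \<inter> N \<noteq> {} \<and> V j \<inter> N \<noteq> {} \<longrightarrow> i = j"
  proof (intro ballI impI)
    fix i j assume "i \<in> J" "j \<in> J" "V i \<inter> N \<noteq> {} \<and> V j \<inter> N \<noteq> {}"
    then show "i = j"
      using N[rule_format, of i j] assms(2,3) by blast
  qed
  ultimately show "\<exists>N. openin X N \<and> x \<in> N \<and>
      (\<forall>i\<in>J. \<forall>j\<in>J. V i \<inter> N \<noteq> {} \<and> V j \<inter> N \<noteq> {} \<longrightarrow> i = j)"
    by (intro exI[of _ N] conjI)
qed

lemma discrete_family_continuous_map_preimage:
  assumes g: "continuous_map X Y g" and disc: "discrete_family Y I U"
  shows "discrete_family X I (\<lambda>i. {x \<in> topspace X. g x \<in> U i})"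
  unfolding discrete_family_def
proof
  fix x assume x: "x \<in> topspace X"
  then have gx: "g x \<in> topspace Y"
    using g by (simp add: continuous_map_def Pi_iff)
  obtain N where "openin Y N" "g x \<in> N"
    and N: "\<forall>i\<in>I. \<forall>j\<in>I. U i \<inter> N \<noteq> {} \<and> U j \<inter> N \<noteq> {} \<longrightarrow> i = j"
    using discrete_familyD[OF disc gx] by blast
  show "\<exists>N. openin X N \<and> x \<in> N \<and> (\<forall>i\<in>I. \<forall>j\<in>I.
      {x \<in> topspace X. g x \<in> U i} \<inter> N \<noteq> {} \<and> {x \<in> topspace X. g x \<in> U j} \<inter> N \<noteq> {} \<longrightarrow> i = j)"
  proof (intro exI[of _ "{x \<in> topspace X. g x \<in> N}"] conjI ballI impI)
    show "openin X {x \<in> topspace X. g x \<in> N}"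
      using g \<open>openin Y N\<close> by (rule openin_continuous_map_preimage)
    show "x \<in> {x \<in> topspace X. g x \<in> N}"
      using x \<open>g x \<in> N\<close> by simp
    fix i j
    assume "i \<in> I" "j \<in> I" "{x \<in> topspace X. g x \<in> U i} \<inter> {x \<in> topspace X. g x \<in> N} \<noteq> {} \<and>
      {x \<in> topspace X. g x \<in> U j} \<inter> {x \<in> topspace X. g x \<in> N} \<noteq> {}"
    then have "U i \<inter> N \<noteq> {}" "U j \<inter> N \<noteq> {}"
      by auto
    with \<open>i \<in> I\<close> \<open>j \<in> I\<close> show "i = j"
      by (intro N[rule_format] conjI)
  qed
qed

lemma discrete_family_unique:
  assumes "discrete_family X I U" "i \<in> I" "j \<in> I" "x \<in> topspace X" "x \<in> U i" "x \<in> U j"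
  shows "i = j"
proof -
  obtain N where "x \<in> N" and N: "\<forall>i\<in>I. \<forall>j\<in>I. U i \<inter> N \<noteq> {} \<and> U j \<inter> N \<noteq> {} \<longrightarrow> i = j"
    using discrete_familyD[OF assms(1,4)] by blast
  then show ?thesis
    using assms(2,3,5,6) by blast
qed

lemma continuous_map_locally_eq:
  assumes "\<And>x. x \<in> topspace X \<Longrightarrow>
    \<exists>N g. openin X N \<and> x \<in> N \<and> continuous_map X Y g \<and> (\<forall>y\<in>N. h y = g y)"
  shows "continuous_map X Y h"
proof -
  obtain N g where N: "\<And>x. x \<in> topspace X \<Longrightarrow> openin X (N x) \<and> x \<in> N x"
    and g: "\<And>x. x \<in> topspace X \<Longrightarrow> continuous_map X Y (g x) \<and> (\<forall>y\<in>N x. h y = g x y)"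
    using assms by metis
  show ?thesis
  proof (rule pasting_lemma[where I = "topspace X" and T = N and f = g])
    fix i j y
    assume "i \<in> topspace X" "j \<in> topspace X" "y \<in> topspace X \<inter> N i \<inter> N j"
    then show "g i y = g j y"
      using g by (metis IntD1 IntD2)
  qed (use N g in \<open>auto intro: continuous_map_from_subtopology\<close>)
qed

lemma continuous_map_glue_discrete:
  assumes disc: "discrete_family X I U"
    and cont: "\<And>i. i \<in> I \<Longrightarrow> continuous_map X Y (h i)"
    and outside: "\<And>i x. i \<in> I \<Longrightarrow> x \<in> topspace X \<Longrightarrow> x \<notin> U i \<Longrightarrow> h i x = c"
    and c: "c \<in> topspace Y"
    and H_inside: "\<And>i x. i \<in> I \<Longrightarrow> x \<in> topspace X \<Longrightarrow> x \<in> U i \<Longrightarrow> H x = h i x"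
    and H_outside: "\<And>x. x \<in> topspace X \<Longrightarrow> (\<forall>i\<in>I. x \<notin> U i) \<Longrightarrow> H x = c"
  shows "continuous_map X Y H"
proof (rule continuous_map_locally_eq)
  fix x assume x: "x \<in> topspace X"
  obtain N where N: "openin X N" "x \<in> N"
    and unique: "\<forall>i\<in>I. \<forall>j\<in>I. U i \<inter> N \<noteq> {} \<and> U j \<inter> N \<noteq> {} \<longrightarrow> i = j"
    using discrete_familyD[OF disc x] by blast
  have NX: "N \<subseteq> topspace X"
    using N(1) by (rule openin_subset)
  show "\<exists>N g. openin X N \<and> x \<in> N \<and> continuous_map X Y g \<and> (\<forall>y\<in>N. H y = g y)"
  proof (cases "\<exists>i\<in>I. U i \<inter> N \<noteq> {}")
    case True
    then obtain i where i: "i \<in> I" "U i \<inter> N \<noteq> {}"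
      by blast
    have "H y = h i y" if y: "y \<in> N" for y
    proof (cases "y \<in> U i")
      case True
      then show ?thesis
        using H_inside i(1) y NX by blast
    next
      case False
      have "y \<notin> U j" if "j \<in> I" for j
        using unique[rule_format, of i j] i that y False by blast
      then show ?thesis
        using H_outside outside[OF i(1) _ False] y NX by blast
    qed
    then show ?thesis
      using N cont[OF i(1)] by blast
  next
    case False
    then have "H y = c" if "y \<in> N" for y
      using H_outside that NX by blast
    then show ?thesis
      using N c by (intro exI[of _ N] exI[of _ "\<lambda>_. c"]) auto
  qed
qed

lemma sfd_mono:
  assumes "sfd X I A" "J \<subseteq> I" "\<And>i. i \<in> J \<Longrightarrow> B i \<subseteq> A i"
  shows "sfd X J B"
proof -
  obtain U where disc: "discrete_family X I U" and U: "\<forall>i\<in>I. fopen X (U i) \<and> X closure_of A i \<subseteq> U i"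
    using assms(1) unfolding sfd_def by blast
  have "discrete_family X J U"
    by (rule discrete_family_mono[OF disc assms(2)]) simp
  moreover have "fopen X (U i) \<and> X closure_of B i \<subseteq> U i" if "i \<in> J" for i
  proof -
    have "X closure_of B i \<subseteq> X closure_of A i"
      using assms(3)[OF that] by (rule closure_of_mono)
    then show ?thesis
      using U assms(2) that by blast
  qed
  ultimately show ?thesis
    unfolding sfd_def by (intro exI[of _ U]) simp
qed

lemma sfd_image:
  assumes "sfd X I A"
  shows "sfd X (A ` I) id"
proof -
  obtain U where disc: "discrete_family X I U" and U: "\<forall>i\<in>I. fopen X (U i) \<and> X closure_of A i \<subseteq> U i"
    using assms unfolding sfd_def by blast
  define index where "index S = (SOME i. i \<in> I \<and> A i = S)" for S
  have index: "index S \<in> I \<and> A (index S) = S" if "S \<in> A ` I" for S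
  proof -
    have "\<exists>i. i \<in> I \<and> A i = S"
      using that by auto
    then show ?thesis
      unfolding index_def by (rule someI_ex)
  qed
  have "discrete_family X (A ` I) (U \<circ> index)"
    unfolding discrete_family_def
  proof
    fix x assume x: "x \<in> topspace X"
    obtain N where "openin X N" "x \<in> N"
      and N: "\<forall>i\<in>I. \<forall>j\<in>I. U i \<inter> N \<noteq> {} \<and> U j \<inter> N \<noteq> {} \<longrightarrow> i = j"
      using discrete_familyD[OF disc x] by blast
    show "\<exists>N. openin X N \<and> x \<in> N \<and> (\<forall>S\<in>A ` I. \<forall>T\<in>A ` I.
        (U \<circ> index) S \<inter> N \<noteq> {} \<and> (U \<circ> index) T \<inter> N \<noteq> {} \<longrightarrow> S = T)"
    proof (intro exI[of _ N] conjI ballI impI)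
      fix S T
      assume S: "S \<in> A ` I" and T: "T \<in> A ` I"
        and meet: "(U \<circ> index) S \<inter> N \<noteq> {} \<and> (U \<circ> index) T \<inter> N \<noteq> {}"
      have "index S = index T"
        by (rule N[rule_format]) (use index[OF S] index[OF T] meet in auto)
      then show "S = T"
        using index[OF S] index[OF T] by metis
    qed fact+
  qed
  moreover have "fopen X ((U \<circ> index) S) \<and> X closure_of id S \<subseteq> (U \<circ> index) S" if "S \<in> A ` I" for S
    using U index[OF that] by (metis comp_apply id_apply)
  ultimately show ?thesis
    unfolding sfd_def by (intro exI[of _ "U \<circ> index"]) simp
qed

lemma sfd_continuous_map_preimage:
  assumes g: "continuous_map X Y g" and "sfd Y I A"
  shows "sfd X I (\<lambda>i. {x \<in> topspace X. g x \<in> A i})"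
proof -
  obtain U where disc: "discrete_family Y I U" and U: "\<forall>i\<in>I. fopen Y (U i) \<and> Y closure_of A i \<subseteq> U i"
    using assms(2) unfolding sfd_def by blast
  have "discrete_family X I (\<lambda>i. {x \<in> topspace X. g x \<in> U i})"
    by (rule discrete_family_continuous_map_preimage[OF g disc])
  moreover have "fopen X {x \<in> topspace X. g x \<in> U i}" if "i \<in> I" for i
    using U that by (intro fopen_continuous_map_preimage[OF g]) simp
  moreover have "X closure_of {x \<in> topspace X. g x \<in> A i} \<subseteq> {x \<in> topspace X. g x \<in> U i}"
    if "i \<in> I" for i
    using continuous_map_closure_preimage_subset[OF g, of "A i"] U that by auto
  ultimately show ?thesis
    unfolding sfd_def by (intro exI[of _ "\<lambda>i. {x \<in> topspace X. g x \<in> U i}"]) simp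
qed

lemma fclosed_Union_sfd:
  assumes sfd: "sfd X I A" and fclosed: "\<And>i. i \<in> I \<Longrightarrow> fclosed X (A i)"
  shows "fclosed X (\<Union>i\<in>I. A i)"
proof -
  obtain U where disc: "discrete_family X I U" and U: "\<forall>i\<in>I. fopen X (U i) \<and> X closure_of A i \<subseteq> U i"
    using sfd unfolding sfd_def by blast
  have A_sub: "A i \<subseteq> topspace X" if "i \<in> I" for i
    using closedin_subset[OF fclosed_imp_closedin[OF fclosed[OF that]]] .
  have AU: "A i \<subseteq> U i" if "i \<in> I" for i
    using closure_of_subset[OF A_sub[OF that]] U that by blast
  then have "\<forall>i\<in>I. \<exists>h. continuous_map X euclideanreal h \<and> (\<forall>x\<in>topspace X. h x = 0 \<longleftrightarrow> x \<in> A i)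
      \<and> (\<forall>x\<in>topspace X. x \<notin> U i \<longrightarrow> h x = 1)"
    using fclosed_fopen_separation[OF fclosed] U by metis
  then obtain h where cont: "\<And>i. i \<in> I \<Longrightarrow> continuous_map X euclideanreal (h i)"
    and zero: "\<And>i x. i \<in> I \<Longrightarrow> x \<in> topspace X \<Longrightarrow> h i x = 0 \<longleftrightarrow> x \<in> A i"
    and one: "\<And>i x. i \<in> I \<Longrightarrow> x \<in> topspace X \<Longrightarrow> x \<notin> U i \<Longrightarrow> h i x = 1"
    by metis
  define H where "H x = (if \<exists>i\<in>I. x \<in> U i then h (THE i. i \<in> I \<and> x \<in> U i) x else 1)" for x
  have H_inside: "H x = h i x" if "i \<in> I" "x \<in> topspace X" "x \<in> U i" for i x
  proof -
    have "(THE i. i \<in> I \<and> x \<in> U i) = i"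
      using that discrete_family_unique[OF disc] by blast
    then show ?thesis
      using that by (auto simp: H_def)
  qed
  have H_outside: "H x = 1" if "\<forall>i\<in>I. x \<notin> U i" for x
    using that by (simp add: H_def)
  have "continuous_map X euclideanreal H"
    by (rule continuous_map_glue_discrete[OF disc cont one _ H_inside H_outside]) auto
  moreover have "(\<Union>i\<in>I. A i) = {x \<in> topspace X. H x = 0}"
  proof (intro equalityI subsetI)
    fix x assume "x \<in> (\<Union>i\<in>I. A i)"
    then obtain i where i: "i \<in> I" "x \<in> A i"
      by blast
    moreover have "x \<in> topspace X" "x \<in> U i"
      using A_sub AU i by blast+
    ultimately show "x \<in> {x \<in> topspace X. H x = 0}"
      using zero H_inside by simp
  next
    fix x assume x: "x \<in> {x \<in> topspace X. H x = 0}"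
    then obtain i where "i \<in> I" "x \<in> U i"
      using H_outside by force
    then show "x \<in> (\<Union>i\<in>I. A i)"
      using x zero H_inside by auto
  qed
  ultimately show ?thesis
    unfolding fclosed_iff by blast
qed

lemma sfd_fclosed_exhaustion:
  assumes "sfd X I A"
  shows "\<exists>Z :: 'i \<Rightarrow> nat \<Rightarrow> 'a set. (\<forall>i\<in>I. \<forall>m. fclosed X (Z i m)) \<and>
    (\<forall>i\<in>I. X closure_of A i \<subseteq> (\<Union>m. Z i m)) \<and> (\<forall>m. sfd X I (\<lambda>i. Z i m))"
proof -
  obtain U where disc: "discrete_family X I U" and U: "\<forall>i\<in>I. fopen X (U i) \<and> X closure_of A i \<subseteq> U i"
    using assms unfolding sfd_def by blast
  then have "\<forall>i\<in>I. \<exists>\<psi>. continuous_map X euclideanreal \<psi> \<and> U i = {x \<in> topspace X. \<psi> x \<noteq> 0}"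
    by (simp add: fopen_iff)
  then obtain \<psi> where cont: "\<And>i. i \<in> I \<Longrightarrow> continuous_map X euclideanreal (\<psi> i)"
    and U_eq: "\<And>i. i \<in> I \<Longrightarrow> U i = {x \<in> topspace X. \<psi> i x \<noteq> 0}"
    by metis
  define Z where "Z i m = {x \<in> topspace X. inverse (real (Suc m)) \<le> \<bar>\<psi> i x\<bar>}" for i m
  define U' where "U' i m = {x \<in> topspace X. inverse (real (Suc m)) / 2 < \<bar>\<psi> i x\<bar>}" for i m
  have Z_fclosed: "fclosed X (Z i m)" if "i \<in> I" for i m
    unfolding Z_def using cont[OF that] by (intro fclosed_le continuous_intros)
  moreover have "X closure_of A i \<subseteq> (\<Union>m. Z i m)" if "i \<in> I" for i
  proof
    fix x assume "x \<in> X closure_of A i"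
    then have "x \<in> topspace X" "\<psi> i x \<noteq> 0"
      using U U_eq that by auto
    moreover obtain m where "inverse (real (Suc m)) < \<bar>\<psi> i x\<bar>"
      using reals_Archimedean[of "\<bar>\<psi> i x\<bar>"] calculation(2) by auto
    ultimately show "x \<in> (\<Union>m. Z i m)"
      unfolding Z_def by (auto intro!: exI[of _ m])
  qed
  moreover have "sfd X I (\<lambda>i. Z i m)" for m
    unfolding sfd_def
  proof (intro exI[of _ "\<lambda>i. U' i m"] conjI ballI)
    show "discrete_family X I (\<lambda>i. U' i m)"
      by (rule discrete_family_mono[OF disc order_refl]) (auto simp: U'_def U_eq)
    fix i assume "i \<in> I"
    show "fopen X (U' i m)"
      unfolding U'_def using cont[OF \<open>i \<in> I\<close>] by (intro fopen_less continuous_intros)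
    have "Z i m \<subseteq> U' i m"
    proof
      fix x assume "x \<in> Z i m"
      then have "x \<in> topspace X" "inverse (real (Suc m)) \<le> \<bar>\<psi> i x\<bar>"
        by (simp_all add: Z_def)
      moreover have "0 < inverse (real (Suc m))"
        by simp
      ultimately have "inverse (real (Suc m)) / 2 < \<bar>\<psi> i x\<bar>"
        by linarith
      with \<open>x \<in> topspace X\<close> show "x \<in> U' i m"
        unfolding U'_def by blast
    qed
    then show "X closure_of Z i m \<subseteq> U' i m"
      using closure_of_eq fclosed_imp_closedin[OF Z_fclosed[OF \<open>i \<in> I\<close>]] by metis
  qed
  ultimately show ?thesis
    by (intro exI[of _ Z]) blast
qed

lemma sigma_sfd_UN:
  fixes \<F> :: "'c::countable \<Rightarrow> 'a set set"
  assumes "\<And>c. sfd X (\<F> c) id"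
  shows "sigma_sfd X (\<Union>c. \<F> c)"
proof -
  have "(\<Union>c. \<F> c) = (\<Union>n. \<F> (from_nat n))"
  proof (intro equalityI subsetI)
    fix S assume "S \<in> (\<Union>c. \<F> c)"
    then obtain c where "S \<in> \<F> c"
      by blast
    then show "S \<in> (\<Union>n. \<F> (from_nat n))"
      by (metis UN_I UNIV_I from_nat_to_nat)
  qed blast
  then show ?thesis
    unfolding sigma_sfd_def using assms by (intro exI[of _ "\<lambda>n. \<F> (from_nat n)"]) simp
qed

section \<open>Bases of mappings\<close>

lemma base_forI:
  assumes "\<And>V x. openin Y V \<Longrightarrow> x \<in> topspace X \<Longrightarrow> f x \<in> V \<Longrightarrow>
    \<exists>B\<in>\<B>. x \<in> B \<and> B \<subseteq> {z \<in> topspace X. f z \<in> V}"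
  shows "base_for X Y f \<B>"
  unfolding base_for_def
proof (intro allI impI)
  fix V assume V: "openin Y V"
  define P where "P = {x \<in> topspace X. f x \<in> V}"
  show "\<exists>\<C>\<subseteq>\<B>. {x \<in> topspace X. f x \<in> V} = \<Union>\<C>"
  proof (intro exI conjI)
    show "{B \<in> \<B>. B \<subseteq> P} \<subseteq> \<B>"
      by blast
    show "{x \<in> topspace X. f x \<in> V} = \<Union>{B \<in> \<B>. B \<subseteq> P}"
      unfolding P_def[symmetric]
    proof (intro equalityI subsetI)
      fix x assume "x \<in> P"
      then obtain B where "B \<in> \<B>" "x \<in> B" "B \<subseteq> P"
        using assms[OF V] unfolding P_def by blast
      then show "x \<in> \<Union>{B \<in> \<B>. B \<subseteq> P}"
        by blast
    qed blast
  qed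
qed

lemma base_forD:
  assumes "base_for X Y f \<B>" "openin Y V" "x \<in> topspace X" "f x \<in> V"
  shows "\<exists>B\<in>\<B>. x \<in> B \<and> B \<subseteq> {z \<in> topspace X. f z \<in> V}"
proof -
  obtain \<C> where "\<C> \<subseteq> \<B>" and V: "{z \<in> topspace X. f z \<in> V} = \<Union>\<C>"
    using assms(1,2) unfolding base_for_def by blast
  moreover have "x \<in> \<Union>\<C>"
    using assms(3,4) V by blast
  ultimately show ?thesis
    by blast
qed

lemma Sigma_f_star_0_imp_Sigma_f: "Sigma_f_star_0 X Y f \<Longrightarrow> Sigma_f X Y f"
  unfolding Sigma_f_star_0_def Sigma_f_def by blast

lemma Sigma_f_star_0_imp_K1:
  assumes "Sigma_f_star_0 X Y f"
  shows "K1 X Y f"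
  unfolding K1_def
proof (intro allI impI)
  obtain \<B> where "sigma_sfd X \<B>" and base: "base_for X Y f \<B>" and fclosed: "\<forall>B\<in>\<B>. fclosed X B"
    using assms unfolding Sigma_f_star_0_def by blast
  then obtain \<A> :: "nat \<Rightarrow> 'a set set" where sfd: "\<And>n. sfd X (\<A> n) id" and \<B>: "\<B> = (\<Union>n. \<A> n)"
    unfolding sigma_sfd_def by blast
  fix V assume "openin Y V"
  then obtain \<C> where "\<C> \<subseteq> \<B>" and V: "{x \<in> topspace X. f x \<in> V} = \<Union>\<C>"
    using base unfolding base_for_def by blast
  have "fclosed X (\<Union>B\<in>\<C> \<inter> \<A> n. id B)" for n
    by (rule fclosed_Union_sfd[OF sfd_mono[OF sfd]]) (use fclosed \<open>\<C> \<subseteq> \<B>\<close> \<B> in auto)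
  moreover have "\<Union>\<C> = (\<Union>n. \<Union>B\<in>\<C> \<inter> \<A> n. id B)"
  proof (intro equalityI subsetI)
    fix x assume "x \<in> \<Union>\<C>"
    then obtain B where B: "B \<in> \<C>" "x \<in> B"
      by blast
    moreover obtain n where "B \<in> \<A> n"
      using B(1) \<open>\<C> \<subseteq> \<B>\<close> unfolding \<B> by blast
    ultimately show "x \<in> (\<Union>n. \<Union>B\<in>\<C> \<inter> \<A> n. id B)"
      by auto
  qed auto
  ultimately show "fFsigma X {x \<in> topspace X. f x \<in> V}"
    unfolding fFsigma_def V by (intro exI[of _ "\<lambda>n. \<Union>B\<in>\<C> \<inter> \<A> n. id B"]) simp
qed

section \<open>Metrizable targets\<close>

context Metric_space
begin

lemma Inf_dist_triangle:
  assumes "S \<noteq> {}" "x \<in> M" "y \<in> M" "S \<subseteq> M"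
  shows "(INF p\<in>S. d x p) \<le> d x y + (INF p\<in>S. d y p)"
proof -
  have "(INF p\<in>S. d x p) - d x y \<le> (INF p\<in>S. d y p)"
  proof (rule cINF_greatest[OF assms(1)])
    fix p assume "p \<in> S"
    then have "(INF p\<in>S. d x p) \<le> d x p"
      by (intro cINF_lower bdd_belowI2[of _ 0]) auto
    also have "\<dots> \<le> d x y + d y p"
      using assms \<open>p \<in> S\<close> triangle by blast
    finally show "(INF p\<in>S. d x p) - d x y \<le> d y p"
      by simp
  qed
  then show ?thesis
    by simp
qed

lemma continuous_map_Inf_dist:
  assumes "S \<noteq> {}" "S \<subseteq> M"
  shows "continuous_map mtopology euclideanreal (\<lambda>x. INF p\<in>S. d x p)"
proof -
  have "continuous_map mtopology Met_TC.mtopology (\<lambda>x. INF p\<in>S. d x p)"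
    unfolding metric_continuous_map[OF Met_TC.Metric_space_axioms]
  proof (intro conjI ballI allI impI exI)
    fix x y and \<epsilon> :: real
    assume "x \<in> M" "0 < \<epsilon>" "y \<in> M \<and> d x y < \<epsilon>"
    then show "dist (INF p\<in>S. d x p) (INF p\<in>S. d y p) < \<epsilon>"
      using Inf_dist_triangle[OF assms(1) _ _ assms(2), of x y]
        Inf_dist_triangle[OF assms(1) _ _ assms(2), of y x] commute[of x y]
      by (simp add: dist_real_def abs_less_iff)
  qed auto
  then show ?thesis
    by simp
qed

lemma Inf_dist_eq_0_iff:
  assumes "closedin mtopology C" "C \<noteq> {}" "x \<in> M"
  shows "(INF p\<in>C. d x p) = 0 \<longleftrightarrow> x \<in> C"
proof
  assume "x \<in> C"
  then have "(INF p\<in>C. d x p) \<le> d x x"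
    by (intro cINF_lower bdd_belowI2[of _ 0]) auto
  moreover have "0 \<le> (INF p\<in>C. d x p)"
    using assms(2) by (intro cINF_greatest) auto
  ultimately show "(INF p\<in>C. d x p) = 0"
    using assms(3) by simp
next
  assume Inf0: "(INF p\<in>C. d x p) = 0"
  show "x \<in> C"
  proof (rule ccontr)
    assume "x \<notin> C"
    then obtain r where "r > 0" "disjnt C (mball x r)"
      using assms(1,3) unfolding closedin_metric by blast
    then have "r \<le> d x p" if "p \<in> C" for p
      using that assms(1,3) closedin_subset by (force simp: disjnt_iff)
    then have "r \<le> (INF p\<in>C. d x p)"
      using assms(2) by (intro cINF_greatest) auto
    then show False
      using Inf0 \<open>r > 0\<close> by simp
  qed
qed

lemma closedin_imp_fclosed:
  assumes "closedin mtopology C"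
  shows "fclosed mtopology C"
proof (cases "C = {}")
  case True
  then show ?thesis
    unfolding fclosed_iff by (intro exI[of _ "\<lambda>_. 1"]) auto
next
  case False
  have "C \<subseteq> M"
    using assms closedin_subset by force
  then show ?thesis
    unfolding fclosed_iff using continuous_map_Inf_dist[OF False] Inf_dist_eq_0_iff[OF assms False]
    by (intro exI[of _ "\<lambda>x. INF p\<in>C. d x p"]) auto
qed

lemma openin_imp_fopen:
  assumes "openin mtopology U"
  shows "fopen mtopology U"
  using assms closedin_imp_fclosed[of "M - U"] openin_subset[OF assms]
  by (auto simp: fopen_iff_fclosed_complement closedin_diff)

lemma sfd_closure_of_separated:
  assumes "r > 0"
    and sep: "\<And>a b p q. a \<in> I \<Longrightarrow> b \<in> I \<Longrightarrow> a \<noteq> b \<Longrightarrow> p \<in> V a \<Longrightarrow> q \<in> V b \<Longrightarrow> r \<le> d p q"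
  shows "sfd mtopology I (\<lambda>a. mtopology closure_of V a)"
proof -
  define U where "U a = (\<Union>p\<in>V a. mball p (r/4))" for a
  have "discrete_family mtopology I U"
    unfolding discrete_family_def
  proof
    fix x assume x: "x \<in> topspace mtopology"
    show "\<exists>N. openin mtopology N \<and> x \<in> N \<and>
        (\<forall>a\<in>I. \<forall>b\<in>I. U a \<inter> N \<noteq> {} \<and> U b \<inter> N \<noteq> {} \<longrightarrow> a = b)"
    proof (intro exI[of _ "mball x (r/4)"] conjI ballI impI)
      fix a b assume ab: "a \<in> I" "b \<in> I" and meet: "U a \<inter> mball x (r/4) \<noteq> {} \<and> U b \<inter> mball x (r/4) \<noteq> {}"
      obtain p y where p: "p \<in> V a" "y \<in> mball p (r/4)" "y \<in> mball x (r/4)"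
        using meet unfolding U_def by blast
      obtain q z where q: "q \<in> V b" "z \<in> mball q (r/4)" "z \<in> mball x (r/4)"
        using meet unfolding U_def by blast
      have "d p q \<le> d p y + d y x + d x z + d z q"
        using p q triangle by (smt (verit) in_mball)
      also have "\<dots> < r"
        using p q commute[of y x] commute[of z q] by simp
      finally show "a = b"
        using sep[OF ab _ p(1) q(1)] by force
    qed (use x \<open>r > 0\<close> in auto)
  qed
  moreover have "fopen mtopology (U a)" for a
    unfolding U_def by (intro openin_imp_fopen) auto
  moreover have "mtopology closure_of (mtopology closure_of V a) \<subseteq> U a" for a
  proof
    fix x assume "x \<in> mtopology closure_of (mtopology closure_of V a)"
    then have "x \<in> mtopology closure_of V a"
      by simp
    moreover have "r/4 > 0"
      using \<open>r > 0\<close> by simp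
    ultimately obtain p where "p \<in> V a" "p \<in> mball x (r/4)"
      unfolding metric_closure_of by blast
    then show "x \<in> U a"
      unfolding U_def by (auto simp: commute)
  qed
  ultimately show ?thesis
    unfolding sfd_def by (intro exI[of _ U]) simp
qed

text \<open>
  A. H. Stone's construction: a well-order \<open>r\<close> of the points lets each point choose the
  \<open>r\<close>-least centre among the balls of radius \<open>2\<^sup>-\<^sup>n\<close> containing it. Cells of layer \<open>(n, k)\<close>
  with different centres are then at distance at least \<open>2\<^sup>-\<^sup>k\<close>.
\<close>

definition stone_centre :: "'a rel \<Rightarrow> nat \<Rightarrow> 'a \<Rightarrow> 'a" where
  "stone_centre r n x = wo_rel.minim r {c \<in> M. x \<in> mball c ((1/2)^n)}"

definition stone_core :: "'a rel \<Rightarrow> nat \<Rightarrow> nat \<Rightarrow> 'a \<Rightarrow> 'a set" where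
  "stone_core r n k a =
     {x \<in> M. stone_centre r n x = a \<and> mball x (3 * (1/2)^k) \<subseteq> mball a ((1/2)^n)}"

definition stone_cell :: "'a rel \<Rightarrow> nat \<Rightarrow> nat \<Rightarrow> 'a \<Rightarrow> 'a set" where
  "stone_cell r n k a = (\<Union>x\<in>stone_core r n k a. mball x ((1/2)^k))"

lemma openin_stone_cell: "openin mtopology (stone_cell r n k a)"
  unfolding stone_cell_def by auto

lemma stone_cell_subset_mball: "stone_cell r n k a \<subseteq> mball a ((1/2)^n)"
proof
  fix p assume "p \<in> stone_cell r n k a"
  then obtain x where x: "x \<in> stone_core r n k a" "p \<in> mball x ((1/2)^k)"
    unfolding stone_cell_def by blast
  have "mball x ((1/2)^k) \<subseteq> mball x (3 * (1/2)^k)"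
    by (rule mball_subset_concentric) simp
  then show "p \<in> mball a ((1/2)^n)"
    using x unfolding stone_core_def by blast
qed

context
  fixes r :: "'a rel"
  assumes wo: "Well_order r" and field: "Field r = UNIV"
begin

lemma stone_centre_mball:
  assumes "x \<in> M"
  shows "stone_centre r n x \<in> M" "x \<in> mball (stone_centre r n x) ((1/2)^n)"
proof -
  interpret wo_rel r
    using wo by (simp add: wo_rel_def)
  have "stone_centre r n x \<in> {c \<in> M. x \<in> mball c ((1/2)^n)}"
    unfolding stone_centre_def using assms field by (intro minim_in) auto
  then show "stone_centre r n x \<in> M" "x \<in> mball (stone_centre r n x) ((1/2)^n)"
    by auto
qed

lemma stone_centre_least:
  assumes "c \<in> M" "x \<in> mball c ((1/2)^n)"
  shows "(stone_centre r n x, c) \<in> r"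
proof -
  interpret wo_rel r
    using wo by (simp add: wo_rel_def)
  show ?thesis
    unfolding stone_centre_def using assms field by (intro minim_least) auto
qed

lemma stone_cores_far:
  assumes "a \<noteq> b" "(a, b) \<in> r" "x \<in> stone_core r n k a" "y \<in> stone_core r n k b"
  shows "3 * (1/2)^k \<le> d x y"
proof (rule ccontr)
  assume "\<not> 3 * (1/2)^k \<le> d x y"
  moreover have "x \<in> M" "y \<in> M" and ball: "mball x (3 * (1/2)^k) \<subseteq> mball a ((1/2)^n)"
    using assms(3,4) unfolding stone_core_def by auto
  ultimately have "y \<in> mball x (3 * (1/2)^k)"
    by simp
  then have "y \<in> mball a ((1/2)^n)"
    using ball by blast
  then have "(stone_centre r n y, a) \<in> r"
    by (intro stone_centre_least) auto
  then have "(b, a) \<in> r"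
    using assms(4) unfolding stone_core_def by auto
  then show False
    using assms(1,2) wo by (auto simp: antisym_def order_on_defs)
qed

lemma stone_cells_separated:
  assumes "a \<noteq> b" "p \<in> stone_cell r n k a" "q \<in> stone_cell r n k b"
  shows "(1/2)^k \<le> d p q"
proof -
  obtain x where x: "x \<in> stone_core r n k a" "p \<in> mball x ((1/2)^k)"
    using assms(2) unfolding stone_cell_def by blast
  obtain y where y: "y \<in> stone_core r n k b" "q \<in> mball y ((1/2)^k)"
    using assms(3) unfolding stone_cell_def by blast
  have "(a, b) \<in> r \<or> (b, a) \<in> r"
    using wo field assms(1) by (auto simp: total_on_def order_on_defs)
  then have "3 * (1/2)^k \<le> d x y"
    using stone_cores_far[OF assms(1) _ x(1) y(1)] stone_cores_far[OF assms(1)[symmetric] _ y(1) x(1)]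
      commute[of x y] by auto
  moreover have "d x y \<le> d x p + d p q + d q y"
    using x y triangle by (smt (verit) in_mball)
  ultimately show ?thesis
    using x(2) y(2) commute[of q y] by simp
qed

lemma stone_cell_centre:
  assumes y: "y \<in> M" and k: "(1/2)^k * 3 < (1/2)^n - d (stone_centre r n y) y"
  shows "y \<in> stone_cell r n k (stone_centre r n y)"
proof -
  have "mball y (3 * (1/2)^k) \<subseteq> mball (stone_centre r n y) ((1/2)^n)"
  proof
    fix z assume "z \<in> mball y (3 * (1/2)^k)"
    moreover have "d (stone_centre r n y) z \<le> d (stone_centre r n y) y + d y z"
      using calculation stone_centre_mball[OF y] y triangle by auto
    ultimately show "z \<in> mball (stone_centre r n y) ((1/2)^n)"
      using stone_centre_mball[OF y] k by auto
  qed
  then have "y \<in> stone_core r n k (stone_centre r n y)"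
    using y unfolding stone_core_def by simp
  then show ?thesis
    unfolding stone_cell_def using y by (auto intro!: bexI[of _ y])
qed

lemma stone_cells_base:
  assumes "openin mtopology W" "y \<in> W"
  obtains n k a where "y \<in> stone_cell r n k a" "mtopology closure_of stone_cell r n k a \<subseteq> W"
proof -
  obtain \<epsilon> where "\<epsilon> > 0" and \<epsilon>: "mball y \<epsilon> \<subseteq> W"
    using assms unfolding openin_mtopology by blast
  have y: "y \<in> M"
    using assms openin_subset by fastforce
  obtain n where "(1/2::real)^n < \<epsilon>/3"
    using real_arch_pow_inv[of "\<epsilon>/3" "1/2"] \<open>\<epsilon> > 0\<close> by auto
  then have n: "(1/2::real)^n * 3 < \<epsilon>"
    by (simp only: less_divide_eq_numeral1)
  define a where "a = stone_centre r n y"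
  have a: "a \<in> M" "d a y < (1/2)^n"
    using stone_centre_mball[OF y, of n] unfolding a_def by auto
  obtain k where "(1/2::real)^k < ((1/2)^n - d a y) / 3"
    using real_arch_pow_inv[of "((1/2)^n - d a y) / 3" "1/2"] a(2) by auto
  then have k: "(1/2::real)^k * 3 < (1/2)^n - d a y"
    by (simp only: less_divide_eq_numeral1)
  have "y \<in> stone_cell r n k a"
    using stone_cell_centre[OF y k[unfolded a_def]] unfolding a_def .
  moreover have "mtopology closure_of stone_cell r n k a \<subseteq> W"
  proof
    fix z assume "z \<in> mtopology closure_of stone_cell r n k a"
    moreover have "(0::real) < (1/2)^k"
      by simp
    ultimately obtain p where p: "p \<in> stone_cell r n k a" "p \<in> mball z ((1/2)^k)"
      unfolding metric_closure_of by blast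
    then have "p \<in> mball a ((1/2)^n)"
      using stone_cell_subset_mball by blast
    then have "d a p < (1/2)^n"
      by simp
    moreover have "d y z \<le> d y a + d a p + d p z"
      using a y p triangle by (smt (verit) in_mball)
    moreover have "d p z < (1/2)^k"
      using p(2) commute[of z p] by simp
    ultimately have "d y z < \<epsilon>"
      using a k n commute[of y a] nonneg[of a y] by linarith
    then show "z \<in> W"
      using \<epsilon> y p by auto
  qed
  ultimately show thesis
    using that by blast
qed

end

lemma base_for_pointwise_limit:
  assumes r: "Well_order r" "Field r = UNIV"
    and lim: "\<And>x. x \<in> topspace X \<Longrightarrow> limitin mtopology (\<lambda>i. g i x) (f x) sequentially"
  shows "base_for X mtopology f (\<Union>(n, k, j). range (\<lambda>a.
    {x \<in> topspace X. \<forall>i\<ge>j. g i x \<in> mtopology closure_of stone_cell r n k a}))"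
proof -
  define C where "C n k a = mtopology closure_of stone_cell r n k a" for n k a
  define E where "E n k j a = {x \<in> topspace X. \<forall>i\<ge>j. g i x \<in> C n k a}" for n k j a
  have "base_for X mtopology f (\<Union>(n, k, j). range (E n k j))"
  proof (rule base_forI)
    fix W x assume W: "openin mtopology W" and x: "x \<in> topspace X" and fx: "f x \<in> W"
    obtain n k a where cell: "f x \<in> stone_cell r n k a" and C_W: "C n k a \<subseteq> W"
      using stone_cells_base[OF r W fx] unfolding C_def by blast
    have "\<forall>\<^sub>F i in sequentially. g i x \<in> stone_cell r n k a"
      using lim[OF x] cell openin_stone_cell by (simp add: limitin_def)
    then obtain j where j: "\<And>i. i \<ge> j \<Longrightarrow> g i x \<in> stone_cell r n k a"
      unfolding eventually_sequentially by blast
    have "stone_cell r n k a \<subseteq> C n k a"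
      unfolding C_def using openin_subset[OF openin_stone_cell] by (intro closure_of_subset) auto
    then have "x \<in> E n k j a"
      using j x unfolding E_def by blast
    moreover have "E n k j a \<subseteq> {z \<in> topspace X. f z \<in> W}"
    proof
      fix z assume z: "z \<in> E n k j a"
      then have "z \<in> topspace X"
        unfolding E_def by blast
      have "f z \<in> C n k a"
      proof (rule limitin_closedin[OF lim[OF \<open>z \<in> topspace X\<close>]])
        show "\<forall>\<^sub>F i in sequentially. g i z \<in> C n k a"
          using z unfolding E_def eventually_sequentially by blast
      qed (auto simp: C_def)
      then have "f z \<in> W"
        using C_W by blast
      then show "z \<in> {z \<in> topspace X. f z \<in> W}"
        using \<open>z \<in> topspace X\<close> by blast
    qed
    moreover have "E n k j a \<in> (\<Union>(n, k, j). range (E n k j))"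
      by (intro UN_I[of "(n, k, j)"]) auto
    ultimately show "\<exists>B\<in>(\<Union>(n, k, j). range (E n k j)). x \<in> B \<and> B \<subseteq> {z \<in> topspace X. f z \<in> W}"
      by blast
  qed
  then show ?thesis
    unfolding E_def[abs_def] C_def .
qed

lemma Baire1_imp_Sigma_f_star_0:
  assumes "Baire1 X mtopology f"
  shows "Sigma_f_star_0 X mtopology f"
proof -
  obtain g where g: "\<And>n. continuous_map X mtopology (g n)"
    and lim: "\<And>x. x \<in> topspace X \<Longrightarrow> limitin mtopology (\<lambda>n. g n x) (f x) sequentially"
    using assms unfolding Baire1_def by blast
  obtain r :: "'a rel" where "Well_order r \<and> Field r = UNIV"
    using well_ordering[where 'a='a] by (rule exE)
  then have r: "Well_order r" "Field r = UNIV"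
    by auto
  define C where "C n k a = mtopology closure_of stone_cell r n k a" for n k a
  define E where "E n k j a = {x \<in> topspace X. \<forall>i\<ge>j. g i x \<in> C n k a}" for n k j a
  define \<B> where "\<B> = (\<Union>(n, k, j). range (E n k j))"
  have E_fclosed: "fclosed X (E n k j a)" for n k j a
  proof -
    have "E n k j a = (\<Inter>i. {x \<in> topspace X. g (j + i) x \<in> C n k a})"
      unfolding E_def by (auto simp: le_iff_add)
    then show ?thesis
      unfolding C_def
      by (simp add: fclosed_Inter_nat fclosed_continuous_map_preimage[OF g] closedin_imp_fclosed)
  qed
  have "sfd X UNIV (E n k j)" for n k j
  proof -
    have "sfd mtopology UNIV (C n k)"
      unfolding C_def using stone_cells_separated[OF r]
      by (intro sfd_closure_of_separated[of "(1/2)^k"]) auto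
    then have "sfd X UNIV (\<lambda>a. {x \<in> topspace X. g j x \<in> C n k a})"
      by (rule sfd_continuous_map_preimage[OF g])
    then show ?thesis
      by (rule sfd_mono) (auto simp: E_def)
  qed
  then have "sigma_sfd X \<B>"
    unfolding \<B>_def by (intro sigma_sfd_UN) (auto intro: sfd_image)
  moreover have "base_for X mtopology f \<B>"
    unfolding \<B>_def E_def[abs_def] C_def by (rule base_for_pointwise_limit[OF r lim])
  moreover have "\<forall>B\<in>\<B>. fclosed X B"
    unfolding \<B>_def using E_fclosed by auto
  ultimately show ?thesis
    unfolding Sigma_f_star_0_def by (intro exI[of _ \<B>]) simp
qed

lemma base_for_fclosed_refinement:
  assumes base: "base_for X mtopology f (\<Union>n. \<A> n)"
    and Z: "\<And>n B. B \<in> \<A> n \<Longrightarrow> X closure_of B \<subseteq> (\<Union>m. Z n B m)"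
    and F: "\<And>B j. {x \<in> topspace X. f x \<in> (\<Union>b\<in>B. mball (f b) (inverse (real (Suc j))))} = (\<Union>k. F B j k)"
  shows "base_for X mtopology f (\<Union>(n, j, k, m). (\<lambda>B. F B j k \<inter> Z n B m) ` \<A> n)"
proof (rule base_forI)
  fix W x assume W: "openin mtopology W" and x: "x \<in> topspace X" and "f x \<in> W"
  obtain \<epsilon> where "\<epsilon> > 0" and \<epsilon>: "mball (f x) \<epsilon> \<subseteq> W"
    using W \<open>f x \<in> W\<close> unfolding openin_mtopology by blast
  have fx: "f x \<in> M"
    using W \<open>f x \<in> W\<close> openin_subset by fastforce
  obtain j where j: "inverse (real (Suc j)) < \<epsilon>/2"
    using reals_Archimedean[of "\<epsilon>/2"] \<open>\<epsilon> > 0\<close> by auto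
  have "\<exists>B\<in>(\<Union>n. \<A> n). x \<in> B \<and> B \<subseteq> {z \<in> topspace X. f z \<in> mball (f x) (\<epsilon>/2)}"
    by (rule base_forD[OF base openin_mball x]) (simp add: fx \<open>\<epsilon> > 0\<close>)
  then obtain n B where "B \<in> \<A> n" "x \<in> B" and B: "B \<subseteq> {z \<in> topspace X. f z \<in> mball (f x) (\<epsilon>/2)}"
    by blast
  then have "x \<in> X closure_of B"
    using closure_of_subset[of B X] by blast
  then obtain m where "x \<in> Z n B m"
    using Z[OF \<open>B \<in> \<A> n\<close>] by blast
  have "f x \<in> (\<Union>b\<in>B. mball (f b) (inverse (real (Suc j))))"
    using \<open>x \<in> B\<close> fx by (intro UN_I[of x]) auto
  then have "x \<in> (\<Union>k. F B j k)"
    unfolding F[symmetric] using x by blast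
  then obtain k where "x \<in> F B j k"
    by blast
  have "F B j k \<subseteq> {z \<in> topspace X. f z \<in> W}"
  proof
    fix z assume "z \<in> F B j k"
    then have "z \<in> {x \<in> topspace X. f x \<in> (\<Union>b\<in>B. mball (f b) (inverse (real (Suc j))))}"
      unfolding F by blast
    then obtain b where z: "z \<in> topspace X" and "b \<in> B"
      and b: "f z \<in> mball (f b) (inverse (real (Suc j)))"
      by blast
    then have "f b \<in> mball (f x) (\<epsilon>/2)"
      using B by blast
    moreover have "d (f x) (f z) \<le> d (f x) (f b) + d (f b) (f z)"
      using b calculation triangle by simp
    ultimately have "f z \<in> mball (f x) \<epsilon>"
      using b j by simp
    then show "z \<in> {z \<in> topspace X. f z \<in> W}"
      using z \<epsilon> by blast
  qed
  moreover have "F B j k \<inter> Z n B m \<in> (\<Union>(n, j, k, m). (\<lambda>B. F B j k \<inter> Z n B m) ` \<A> n)"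
    using \<open>B \<in> \<A> n\<close> by (intro UN_I[of "(n, j, k, m)"]) auto
  ultimately show "\<exists>C\<in>(\<Union>(n, j, k, m). (\<lambda>B. F B j k \<inter> Z n B m) ` \<A> n).
      x \<in> C \<and> C \<subseteq> {z \<in> topspace X. f z \<in> W}"
    using \<open>x \<in> F B j k\<close> \<open>x \<in> Z n B m\<close> by (intro bexI[of _ "F B j k \<inter> Z n B m"]) auto
qed

lemma K1_Sigma_f_imp_Sigma_f_star_0:
  assumes K1: "K1 X mtopology f" and Sigma: "Sigma_f X mtopology f"
  shows "Sigma_f_star_0 X mtopology f"
proof -
  obtain \<B> where "sigma_sfd X \<B>" and base: "base_for X mtopology f \<B>"
    using Sigma unfolding Sigma_f_def by blast
  then obtain \<A> :: "nat \<Rightarrow> 'b set set" where sfd: "\<And>n. sfd X (\<A> n) id" and \<B>: "\<B> = (\<Union>n. \<A> n)"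
    unfolding sigma_sfd_def by blast
  have "\<forall>n. \<exists>Z :: 'b set \<Rightarrow> nat \<Rightarrow> 'b set. (\<forall>B\<in>\<A> n. \<forall>m. fclosed X (Z B m)) \<and>
      (\<forall>B\<in>\<A> n. X closure_of B \<subseteq> (\<Union>m. Z B m)) \<and> (\<forall>m. sfd X (\<A> n) (\<lambda>B. Z B m))"
    using sfd_fclosed_exhaustion[OF sfd] by simp
  then obtain Z :: "nat \<Rightarrow> 'b set \<Rightarrow> nat \<Rightarrow> 'b set" where Z: "\<forall>n. (\<forall>B\<in>\<A> n. \<forall>m. fclosed X (Z n B m)) \<and>
      (\<forall>B\<in>\<A> n. X closure_of B \<subseteq> (\<Union>m. Z n B m)) \<and> (\<forall>m. sfd X (\<A> n) (\<lambda>B. Z n B m))"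
    unfolding choice_iff by blast
  define N where "N B j = (\<Union>b\<in>B. mball (f b) (inverse (real (Suc j))))" for B j
  have "\<forall>B j. \<exists>F :: nat \<Rightarrow> 'b set. (\<forall>k. fclosed X (F k)) \<and>
      {x \<in> topspace X. f x \<in> N B j} = (\<Union>k. F k)"
  proof (intro allI)
    fix B j
    have "openin mtopology (N B j)"
      unfolding N_def by auto
    then show "\<exists>F :: nat \<Rightarrow> 'b set. (\<forall>k. fclosed X (F k)) \<and> {x \<in> topspace X. f x \<in> N B j} = (\<Union>k. F k)"
      using K1 unfolding K1_def fFsigma_def by blast
  qed
  then obtain F :: "'b set \<Rightarrow> nat \<Rightarrow> nat \<Rightarrow> 'b set" where F: "\<forall>B j. (\<forall>k. fclosed X (F B j k)) \<and>
      {x \<in> topspace X. f x \<in> N B j} = (\<Union>k. F B j k)"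
    unfolding choice_iff by blast
  define E where "E n j k m B = F B j k \<inter> Z n B m" for n j k m B
  have sfd_E: "sfd X (\<A> n) (E n j k m)" for n j k m
    by (rule sfd_mono[where A = "\<lambda>B. Z n B m"]) (use Z in \<open>auto simp: E_def\<close>)
  have "sigma_sfd X (\<Union>(n, j, k, m). E n j k m ` \<A> n)"
  proof (rule sigma_sfd_UN)
    fix c :: "nat \<times> nat \<times> nat \<times> nat"
    show "sfd X ((\<lambda>(n, j, k, m). E n j k m ` \<A> n) c) id"
      using sfd_image[OF sfd_E] by (simp split: prod.split)
  qed
  moreover have "base_for X mtopology f (\<Union>(n, j, k, m). E n j k m ` \<A> n)"
    unfolding E_def using Z F by (intro base_for_fclosed_refinement[OF base[unfolded \<B>]]) (auto simp: N_def)
  moreover have "\<forall>B\<in>(\<Union>(n, j, k, m). E n j k m ` \<A> n). fclosed X B"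
    using F Z by (auto simp: E_def intro: fclosed_Int)
  ultimately show ?thesis
    unfolding Sigma_f_star_0_def by (intro exI[of _ "\<Union>(n, j, k, m). E n j k m ` \<A> n"]) simp
qed

end

theorem mainTheorem1:
  fixes X :: "'a topology" and Y :: "'b topology"
  assumes "metrizable_space Y"
  shows "\<forall>f. f \<in> topspace X \<rightarrow> topspace Y \<longrightarrow>
           (Baire1 X Y f \<longrightarrow> Sigma_f_star_0 X Y f) \<and>
           (Sigma_f_star_0 X Y f \<longleftrightarrow> K1 X Y f \<and> Sigma_f X Y f)"
proof -
  obtain M d where "Metric_space M d" and Y: "Y = Metric_space.mtopology M d"
    using assms unfolding metrizable_space_def by blast
  then interpret Metric_space M d
    by simp
  have "Baire1 X Y f \<Longrightarrow> Sigma_f_star_0 X Y f" for f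
    using Baire1_imp_Sigma_f_star_0 Y by simp
  moreover have "Sigma_f_star_0 X Y f \<longleftrightarrow> K1 X Y f \<and> Sigma_f X Y f" for f
    using Sigma_f_star_0_imp_K1 Sigma_f_star_0_imp_Sigma_f K1_Sigma_f_imp_Sigma_f_star_0 Y by blast
  ultimately show ?thesis
    by blast
qed

end
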